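(* In the $m$-type setting described in the context, suppose $x_i=x$ for all types $i$. Then diffusion occurs from a small seed if and only if $x>1$.
   Context: There are $m\ge1$ types. $\Pi=(\pi_{ij})$ is a nonnegative row-stochastic primitive $m\times m$ matrix ($\pi_{ij}$ is the probability that a meeting of a type-$i$ agent is with a type-$j$ agent). For each type $i$: $P_i$ is a degree distribution on the nonnegative integers; $w_i(d)>0$ are degree weights; $f_i(d,a)$, $g_i(d,a)$ ($0\le a\le d$) are adoption and abandonment rates satisfying: $f_i(d,0)=0$; $f_i(d,a)$ nondecreasing in $a$; $f_i(d,1)>0$ for some $d$ with $P_i(d)>0$; $g_i(d,0)>0$; $g_i(d,a)$ nonincreasing in $a$. Let $x_i=\sum_dP_i(d)w_i(d)\,d\,\frac{f_i(d,1)}{g_i(d,0)}$, assumed finite; it is positive. $A$ is the $m\times m$ matrix with $A_{ij}=\pi_{ij}x_j$. Diffusion occurs from a small seed means: for every $\varepsilon>0$ there exists $v\in\mathbb{R}^m$ with $0<v_i<\varepsilon$ and $(Av)_i>v_i$ for all $i$. *)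

theory Defs
  imports "HOL-Analysis.Analysis"
begin

text \<open>Types are indexed by a finite type 'i (so m = CARD('i) >= 1).
  Matrices are real^'i^'i, with (M $ i $ j) the (i,j) entry.\<close>

fun mat_pow :: "real^'i::finite^'i \<Rightarrow> nat \<Rightarrow> real^'i^'i" where
  "mat_pow M 0 = mat 1"
| "mat_pow M (Suc k) = M ** mat_pow M k"

definition nonneg_matrix :: "real^'i::finite^'i \<Rightarrow> bool" where
  "nonneg_matrix M \<longleftrightarrow> (\<forall>i j. 0 \<le> M $ i $ j)"

definition row_stochastic :: "real^'i::finite^'i \<Rightarrow> bool" where
  "row_stochastic M \<longleftrightarrow> nonneg_matrix M \<and> (\<forall>i. (\<Sum>j\<in>UNIV. M $ i $ j) = 1)"

definition primitive :: "real^'i::finite^'i \<Rightarrow> bool" where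
  "primitive M \<longleftrightarrow> nonneg_matrix M \<and> (\<exists>k. \<forall>i j. 0 < mat_pow M k $ i $ j)"

definition degree_distribution :: "(nat \<Rightarrow> real) \<Rightarrow> bool" where
  "degree_distribution p \<longleftrightarrow> (\<forall>d. 0 \<le> p d) \<and> p sums 1"

definition xval :: "('i \<Rightarrow> nat \<Rightarrow> real) \<Rightarrow> ('i \<Rightarrow> nat \<Rightarrow> real) \<Rightarrow>
    ('i \<Rightarrow> nat \<Rightarrow> nat \<Rightarrow> real) \<Rightarrow> ('i \<Rightarrow> nat \<Rightarrow> nat \<Rightarrow> real) \<Rightarrow> 'i \<Rightarrow> real" where
  "xval P w f g i = (\<Sum>d. P i d * w i d * real d * f i d 1 / g i d 0)"

definition Amat :: "real^'i::finite^'i \<Rightarrow> ('i \<Rightarrow> real) \<Rightarrow> real^'i^'i" where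
  "Amat M x = (\<chi> i j. M $ i $ j * x j)"

definition diffusion_small_seed :: "real^'i::finite^'i \<Rightarrow> bool" where
  "diffusion_small_seed A \<longleftrightarrow>
     (\<forall>\<epsilon>>0. \<exists>v::real^'i. (\<forall>i. 0 < v $ i \<and> v $ i < \<epsilon>) \<and> (\<forall>i. (A *v v) $ i > v $ i))"

end

theory Submission
  imports Defs
begin

text \<open>When all x_i equal x, the matrix A is x \<Pi>. A row-stochastic \<Pi> fixes constant vectors,
  so for x > 1 any small constant seed grows. Conversely, at a maximal coordinate i of a
  positive seed v, (\<Pi> v)_i is an average of coordinates of v and hence at most v_i, so
  (A v)_i > v_i forces x > 1.\<close>

lemma Amat_const: "Amat M (\<lambda>_. c) = c *\<^sub>R M"
  by (simp add: Amat_def vec_eq_iff mult.commute)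

lemma scaleR_matrix_vector_mult_nth:
  fixes M :: "real^'n::finite^'m::finite"
  shows "((c *\<^sub>R M) *v v) $ i = c * (M *v v) $ i"
  by (simp add: matrix_vector_mult_def sum_distrib_left mult.assoc)

lemma row_stochastic_mult_const_vector:
  assumes "row_stochastic M"
  shows "M *v (\<chi> j. a) = (\<chi> j. a)"
  using assms
  by (simp add: row_stochastic_def vec_eq_iff matrix_vector_mult_def sum_distrib_right[symmetric])

lemma row_stochastic_mult_vector_nonneg:
  assumes "row_stochastic M" and "\<And>j. 0 \<le> v $ j"
  shows "0 \<le> (M *v v) $ i"
  using assms
  by (auto simp: row_stochastic_def nonneg_matrix_def matrix_vector_mult_def intro!: sum_nonneg)

lemma row_stochastic_mult_vector_le:
  assumes "row_stochastic M" and "\<And>j. v $ j \<le> b"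
  shows "(M *v v) $ i \<le> b"
proof -
  have "(M *v v) $ i = (\<Sum>j\<in>UNIV. M $ i $ j * v $ j)"
    by (simp add: matrix_vector_mult_def)
  also have "\<dots> \<le> (\<Sum>j\<in>UNIV. M $ i $ j * b)"
    using assms by (intro sum_mono mult_left_mono) (auto simp: row_stochastic_def nonneg_matrix_def)
  also have "\<dots> = b"
    using assms(1) by (simp add: row_stochastic_def sum_distrib_right[symmetric])
  finally show ?thesis .
qed

lemma diffusion_small_seed_scaleR_row_stochastic_iff:
  fixes M :: "real^'i::finite^'i"
  assumes M: "row_stochastic M"
  shows "diffusion_small_seed (c *\<^sub>R M) \<longleftrightarrow> c > 1"
proof
  assume "diffusion_small_seed (c *\<^sub>R M)"
  then obtain v :: "real^'i" where v_pos: "\<And>j. 0 < v $ j"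
    and grows: "\<And>j. v $ j < c * (M *v v) $ j"
    unfolding diffusion_small_seed_def scaleR_matrix_vector_mult_nth by (meson zero_less_one)
  have "Max (range (($) v)) \<in> range (($) v)"
    by (intro Max_in) auto
  then obtain i where "v $ i = Max (range (($) v))"
    by (metis rangeE)
  then have i_max: "\<And>j. v $ j \<le> v $ i"
    by simp
  let ?s = "(M *v v) $ i"
  have "?s \<le> v $ i"
    using M i_max by (rule row_stochastic_mult_vector_le)
  moreover have "v $ i < c * ?s"
    using grows .
  moreover have "0 \<le> ?s"
    using M v_pos by (simp add: row_stochastic_mult_vector_nonneg less_imp_le)
  moreover have "?s \<noteq> 0"
    using grows[of i] v_pos[of i] by auto
  ultimately have "0 < ?s" and "?s < c * ?s"
    by linarith+
  then show "c > 1"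
    using mult_less_cancel_right_pos[of ?s 1 c] by simp
next
  assume c: "c > 1"
  show "diffusion_small_seed (c *\<^sub>R M)"
    unfolding diffusion_small_seed_def
  proof (intro allI impI)
    fix e :: real
    assume "e > 0"
    let ?v = "(\<chi> j. e / 2) :: real^'i"
    have "(c *\<^sub>R M) *v ?v = (\<chi> j. c * (e / 2))"
      by (simp add: vec_eq_iff scaleR_matrix_vector_mult_nth row_stochastic_mult_const_vector[OF M])
    with \<open>e > 0\<close> c show "\<exists>v::real^'i. (\<forall>i. 0 < v $ i \<and> v $ i < e) \<and> (\<forall>i. ((c *\<^sub>R M) *v v) $ i > v $ i)"
      by (intro exI[of _ ?v]) auto
  qed
qed

theorem corollary4:
  fixes PiM :: "real^'i::finite^'i"
    and P w :: "'i \<Rightarrow> nat \<Rightarrow> real"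
    and f g :: "'i \<Rightarrow> nat \<Rightarrow> nat \<Rightarrow> real"
    and x :: real
  assumes Pi_stoch: "row_stochastic PiM"
    and Pi_prim: "primitive PiM"
    and P_dist: "\<And>i. degree_distribution (P i)"
    and w_pos: "\<And>i d. 0 < w i d"
    and f_nonneg: "\<And>i d a. a \<le> d \<Longrightarrow> 0 \<le> f i d a"
    and g_nonneg: "\<And>i d a. a \<le> d \<Longrightarrow> 0 \<le> g i d a"
    and f_zero: "\<And>i d. f i d 0 = 0"
    and f_mono: "\<And>i d a b. a \<le> b \<Longrightarrow> b \<le> d \<Longrightarrow> f i d a \<le> f i d b"
    and f_pos: "\<And>i. \<exists>d\<ge>1. 0 < P i d \<and> 0 < f i d 1"
    and g_pos: "\<And>i d. 0 < g i d 0"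
    and g_mono: "\<And>i d a b. a \<le> b \<Longrightarrow> b \<le> d \<Longrightarrow> g i d b \<le> g i d a"
    and x_finite: "\<And>i. summable (\<lambda>d. P i d * w i d * real d * f i d 1 / g i d 0)"
    and x_const: "\<And>i. xval P w f g i = x"
  shows "diffusion_small_seed (Amat PiM (xval P w f g)) \<longleftrightarrow> x > 1"
proof -
  have "xval P w f g = (\<lambda>_. x)"
    using x_const by auto
  then have "Amat PiM (xval P w f g) = x *\<^sub>R PiM"
    by (simp add: Amat_const)
  then show ?thesis
    using diffusion_small_seed_scaleR_row_stochastic_iff[OF Pi_stoch] by simp
qed

end
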